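(* Let $(X,d)$ be a metric space and let $u,u_1,u_2,\ldots\in F_{USCG}(X)$. Then the following statements are equivalent: (i) $u_n\stackrel{\Gamma}{\longrightarrow}u$; (ii) $[u_n]_\alpha$ Kuratowski converges to $[u]_\alpha$ for almost every $\alpha\in(0,1)$ (with respect to Lebesgue measure); (iii) $[u_n]_\alpha$ Kuratowski converges to $[u]_\alpha$ for all $\alpha\in(0,1)\setminus P(u)$; (iv) there is a dense subset $P$ of $(0,1)\setminus P(u)$ such that $[u_n]_\alpha$ Kuratowski converges to $[u]_\alpha$ for all $\alpha\in P$; (v) there is a countable dense subset $P$ of $(0,1)\setminus P(u)$ such that $[u_n]_\alpha$ Kuratowski converges to $[u]_\alpha$ for all $\alpha\in P$.
   Context: A fuzzy set on $X$ is a function $u:X\to[0,1]$, with $\alpha$-cuts $[u]_\alpha=\{x: u(x)\ge\alpha\}$ for $\alpha\in(0,1]$ and $[u]_0=\overline{\{u>0\}}$. $F_{USC}(X)$ is the set of fuzzy sets with all $\alpha$-cuts ($\alpha\in[0,1]$) non-empty and closed; $F_{USCG}(X)=\{u\in F_{USC}(X): [u]_\alpha\text{ is compact for all }\alpha\in(0,1]\}$. For sets $C_n\subseteq X$: $\liminf_n C_n=\{x: x=\lim_n x_n, x_n\in C_n\}$, $\limsup_n C_n=\{x: x=\lim_j x_{n_j}, x_{n_j}\in C_{n_j}\}$; $C_n$ Kuratowski converges to $C$ if $C=\liminf_n C_n=\limsup_n C_n$. ${\rm end}\,u=\{(x,t)\in X\times[0,1]: u(x)\ge t\}$, with $X\times[0,1]$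 metrized by $\overline{d}((x,\alpha),(y,\beta))=d(x,y)+|\alpha-\beta|$. $u_n\stackrel{\Gamma}{\longrightarrow}u$ means ${\rm end}\,u_n$ Kuratowski converges to ${\rm end}\,u$. A number $\alpha\in(0,1)$ is a platform point of $u$ if $\overline{\{u>\alpha\}}\subsetneqq[u]_\alpha$; $P(u)$ is the set of platform points of $u$. *)

theory Defs
  imports "HOL-Analysis.Analysis"
begin

text \<open>Fuzzy sets on a metric space X (the whole type 'a) are functions 'a \<Rightarrow> real
  with values in [0,1].\<close>

definition cut :: "('a::metric_space \<Rightarrow> real) \<Rightarrow> real \<Rightarrow> 'a set" where
  "cut u \<alpha> = (if \<alpha> = 0 then closure {x. u x > 0} else {x. u x \<ge> \<alpha>})"

definition F_USC :: "('a::metric_space \<Rightarrow> real) set" where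
  "F_USC = {u. (\<forall>x. 0 \<le> u x \<and> u x \<le> 1) \<and>
               (\<forall>\<alpha>\<in>{0..1}. cut u \<alpha> \<noteq> {} \<and> closed (cut u \<alpha>))}"

definition F_USCG :: "('a::metric_space \<Rightarrow> real) set" where
  "F_USCG = {u. u \<in> F_USC \<and> (\<forall>\<alpha>\<in>{0<..1}. compact (cut u \<alpha>))}"

definition kliminf :: "(nat \<Rightarrow> 'a::metric_space set) \<Rightarrow> 'a set" where
  "kliminf C = {x. \<exists>f. (\<forall>n. f n \<in> C n) \<and> f \<longlonglongrightarrow> x}"

definition klimsup :: "(nat \<Rightarrow> 'a::metric_space set) \<Rightarrow> 'a set" where
  "klimsup C = {x. \<exists>r f. strict_mono r \<and> (\<forall>j. f j \<in> C (r j)) \<and> f \<longlonglongrightarrow> x}"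

definition kuratowski_conv :: "(nat \<Rightarrow> 'a::metric_space set) \<Rightarrow> 'a set \<Rightarrow> bool" where
  "kuratowski_conv C D \<longleftrightarrow> D = kliminf C \<and> D = klimsup C"

text \<open>Endograph, as a subset of X \<times> [0,1]; the product metric of Isabelle's product type
  induces the same convergent sequences as d(x,y) + |\<alpha> - \<beta>|.\<close>
definition endo :: "('a::metric_space \<Rightarrow> real) \<Rightarrow> ('a \<times> real) set" where
  "endo u = {(x, t). t \<in> {0..1} \<and> u x \<ge> t}"

definition gamma_conv :: "(nat \<Rightarrow> 'a::metric_space \<Rightarrow> real) \<Rightarrow> ('a \<Rightarrow> real) \<Rightarrow> bool" where
  "gamma_conv us u \<longleftrightarrow> kuratowski_conv (\<lambda>n. endo (us n)) (endo u)"

definition platform_points :: "('a::metric_space \<Rightarrow> real) \<Rightarrow> real set" where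
  "platform_points u = {\<alpha>\<in>{0<..<1}. closure {x. u x > \<alpha>} \<subset> cut u \<alpha>}"

end

theory Submission
  imports Defs
begin

(*
  If the cuts converge on a dense set P of levels, a point (x, t) of the endograph of u
  is approximated by the points (x, g), g \<in> P slightly below t, which lie in the liminf
  of the endographs; and a limit (x, t) of endograph points of a subsequence with
  t > u x would put x into the limsup of the g-cuts, that is into [u]_g, for some g \<in> P
  with u x < g < t. Conversely, \<Gamma>-convergence gives
  limsup [u_n]_\<alpha> \<subseteq> [u]_\<alpha> and {u > \<alpha>} \<subseteq> liminf [u_n]_\<alpha>, and [u]_\<alpha> is the closure
  of {u > \<alpha>} exactly when \<alpha> is not a platform point.
  A platform point is the value of a local maximum. Maximisers with value at least 1/k
  and radius at least 1/m are 1/m-separated points of the compact cut [u]_(1/k), hence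
  finitely many; so P(u) is countable, thus Lebesgue-null, and its complement is dense.
*)

lemma infdist_less_imp_dist_less:
  assumes "A \<noteq> {}" "infdist x A < e"
  shows "\<exists>y\<in>A. dist x y < e"
proof -
  have "Inf (dist x ` A) < e"
    using assms infdist_notempty[of A x] by simp
  then show ?thesis
    using cInf_lessD[of "dist x ` A"] assms(1) by blast
qed

lemma kliminf_iff_infdist:
  assumes "\<And>n. C n \<noteq> {}"
  shows "x \<in> kliminf C \<longleftrightarrow> (\<lambda>n. infdist x (C n)) \<longlonglongrightarrow> 0"
proof
  assume "x \<in> kliminf C"
  then obtain f where f: "\<And>n. f n \<in> C n" "f \<longlonglongrightarrow> x" by (auto simp: kliminf_def)
  have bound: "(\<lambda>n. dist x (f n)) \<longlonglongrightarrow> 0"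
    using tendsto_dist[OF tendsto_const f(2), of x] by simp
  show "(\<lambda>n. infdist x (C n)) \<longlonglongrightarrow> 0"
    by (rule tendsto_sandwich[OF _ _ tendsto_const bound]) (auto simp: infdist_nonneg infdist_le f(1))
next
  assume lim: "(\<lambda>n. infdist x (C n)) \<longlonglongrightarrow> 0"
  have "\<exists>y\<in>C n. dist x y < infdist x (C n) + 1 / Suc n" for n
    using assms by (intro infdist_less_imp_dist_less) auto
  then obtain f where f: "\<And>n. f n \<in> C n" "\<And>n. dist x (f n) < infdist x (C n) + 1 / Suc n"
    by metis
  have bound: "(\<lambda>n. infdist x (C n) + 1 / Suc n) \<longlonglongrightarrow> 0"
    using tendsto_add[OF lim LIMSEQ_inverse_real_of_nat] by (simp add: inverse_eq_divide)
  have "(\<lambda>n. dist x (f n)) \<longlonglongrightarrow> 0"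
    by (rule tendsto_sandwich[OF _ _ tendsto_const bound]) (intro always_eventually allI zero_le_dist less_imp_le[OF f(2)])+
  then have "f \<longlonglongrightarrow> x"
    by (simp add: dist_commute tendsto_dist_iff[of f x])
  with f(1) show "x \<in> kliminf C" by (auto simp: kliminf_def)
qed

lemma closed_kliminf:
  assumes ne: "\<And>n. C n \<noteq> {}"
  shows "closed (kliminf C)"
proof -
  have "x \<in> kliminf C" if x: "x \<in> closure (kliminf C)" for x
  proof -
    have "\<forall>\<^sub>F n in sequentially. infdist x (C n) < e" if "e > 0" for e
    proof -
      obtain y where y: "y \<in> kliminf C" "dist y x < e / 2"
        using x \<open>e > 0\<close> closure_approachable[of x "kliminf C"] half_gt_zero by blast
      then have "(\<lambda>n. infdist y (C n)) \<longlonglongrightarrow> 0"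
        by (simp add: kliminf_iff_infdist[OF ne])
      then have "\<forall>\<^sub>F n in sequentially. infdist y (C n) < e / 2"
        using order_tendstoD(2)[of _ 0 _ "e / 2"] \<open>e > 0\<close> by simp
      then show ?thesis
      proof eventually_elim
        case (elim n)
        then show ?case
          using infdist_triangle[of x "C n" y] y(2) by (simp add: dist_commute)
      qed
    qed
    then have "(\<lambda>n. infdist x (C n)) \<longlonglongrightarrow> 0"
      by (intro order_tendstoI) (auto intro: always_eventually less_le_trans[OF _ infdist_nonneg])
    then show ?thesis by (simp add: kliminf_iff_infdist[OF ne])
  qed
  then show ?thesis
    using closure_subset_eq by blast
qed

lemma kliminfI_eventually:
  assumes ne: "\<And>n. C n \<noteq> {}" and ev: "\<forall>\<^sub>F n in sequentially. f n \<in> C n"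
    and lim: "f \<longlonglongrightarrow> x"
  shows "x \<in> kliminf C"
proof -
  define g where "g n = (if f n \<in> C n then f n else (SOME y. y \<in> C n))" for n
  have "g n \<in> C n" for n
    using ne[of n] by (auto simp: g_def intro: someI_ex)
  moreover have "g \<longlonglongrightarrow> x"
    using lim by (rule Lim_transform_eventually) (use ev in \<open>auto simp: g_def elim: eventually_mono\<close>)
  ultimately show ?thesis by (auto simp: kliminf_def)
qed

lemma klimsupI_eventually:
  assumes r: "strict_mono r" and ev: "\<forall>\<^sub>F j in sequentially. f j \<in> C (r j)"
    and lim: "f \<longlonglongrightarrow> x"
  shows "x \<in> klimsup C"
proof -
  obtain N where N: "\<And>j. j \<ge> N \<Longrightarrow> f j \<in> C (r j)"
    using ev by (auto simp: eventually_sequentially)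
  have "strict_mono (\<lambda>j. r (j + N))"
    using r by (simp add: strict_mono_def)
  moreover have "(\<lambda>j. f (j + N)) \<longlonglongrightarrow> x"
    using lim by (rule LIMSEQ_ignore_initial_segment)
  ultimately show ?thesis
    using N unfolding klimsup_def mem_Collect_eq by (intro exI conjI allI) auto
qed

lemma kliminf_subset_klimsup: "kliminf C \<subseteq> klimsup C"
  unfolding kliminf_def klimsup_def using strict_mono_id by (fastforce simp: id_def)

lemma kuratowski_conv_iff: "kuratowski_conv C D \<longleftrightarrow> D \<subseteq> kliminf C \<and> klimsup C \<subseteq> D"
  using kliminf_subset_klimsup[of C] by (auto simp: kuratowski_conv_def)

lemma mem_endo [simp]: "(x, t) \<in> endo v \<longleftrightarrow> 0 \<le> t \<and> t \<le> 1 \<and> t \<le> v x"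
  by (auto simp: endo_def)

lemma cut_nonzero: "\<alpha> \<noteq> 0 \<Longrightarrow> cut u \<alpha> = {x. \<alpha> \<le> u x}"
  by (simp add: cut_def)

lemma F_USC_range: "u \<in> F_USC \<Longrightarrow> 0 \<le> u x \<and> u x \<le> 1"
  by (simp add: F_USC_def)

lemma F_USC_cut: "u \<in> F_USC \<Longrightarrow> \<alpha> \<in> {0..1} \<Longrightarrow> cut u \<alpha> \<noteq> {} \<and> closed (cut u \<alpha>)"
  by (simp add: F_USC_def)

lemma exists_between_if_dense:
  assumes "{0<..<1} \<subseteq> closure P" "0 \<le> a" "a < b" "b \<le> (1::real)"
  obtains g where "g \<in> P" "a < g" "g < b"
proof -
  have "{a<..<b} \<subseteq> closure P" "{a<..<b} \<noteq> {}"
    using assms by auto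
  then have "{a<..<b} \<inter> closure P \<noteq> {}"
    by blast
  then have "{a<..<b} \<inter> P \<noteq> {}"
    by (simp add: open_Int_closure_eq_empty)
  then show ?thesis using that by auto
qed

lemma subset_closure_diff_null_set:
  fixes S :: "'a::euclidean_space set"
  assumes "open S" "N \<in> null_sets lborel"
  shows "S \<subseteq> closure (S - N)"
proof
  fix x assume "x \<in> S"
  show "x \<in> closure (S - N)"
  proof (rule ccontr)
    assume "x \<notin> closure (S - N)"
    then have "open (S - closure (S - N))" "S - closure (S - N) \<noteq> {}"
      using \<open>open S\<close> \<open>x \<in> S\<close> by auto
    moreover have "negligible (S - closure (S - N))"
    proof (rule negligible_subset)
      show "negligible N"
        using assms(2) by (simp add: negligible_iff_null_sets null_sets_completionI)
      show "S - closure (S - N) \<subseteq> N"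
        using closure_subset[of "S - N"] by blast
    qed
    ultimately show False
      using open_not_negligible by blast
  qed
qed

lemma endo_subset_kliminf_if_cut_subset_kliminf:
  fixes u :: "'a::metric_space \<Rightarrow> real" and us :: "nat \<Rightarrow> 'a \<Rightarrow> real"
  assumes us_nonneg: "\<And>n x. 0 \<le> us n x"
    and P: "P \<subseteq> {0<..<1}" "{0<..<1} \<subseteq> closure P"
    and cuts: "\<And>\<alpha>. \<alpha> \<in> P \<Longrightarrow> cut u \<alpha> \<subseteq> kliminf (\<lambda>n. cut (us n) \<alpha>)"
  shows "endo u \<subseteq> kliminf (\<lambda>n. endo (us n))"
proof safe
  have level: "(x, g) \<in> kliminf (\<lambda>n. endo (us n))" if g: "g \<in> P" "g \<le> u x" for x g
  proof -
    have "0 < g" "g < 1"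
      using g(1) P(1) by auto
    then have "x \<in> cut u g"
      using g(2) by (simp add: cut_nonzero)
    then obtain f where f: "\<And>n. f n \<in> cut (us n) g" "f \<longlonglongrightarrow> x"
      using cuts[OF g(1)] by (auto simp: kliminf_def)
    show ?thesis
      unfolding kliminf_def mem_Collect_eq using f \<open>0 < g\<close> \<open>g < 1\<close>
      by (intro exI[of _ "\<lambda>n. (f n, g)"]) (auto simp: cut_nonzero intro: tendsto_intros)
  qed
  fix x \<alpha> assume "(x, \<alpha>) \<in> endo u"
  then have \<alpha>: "0 \<le> \<alpha>" "\<alpha> \<le> 1" "\<alpha> \<le> u x" by auto
  have "(x, 0) \<in> endo (us n)" for n
    using us_nonneg by simp
  then have ne: "endo (us n) \<noteq> {}" for n
    by blast
  show "(x, \<alpha>) \<in> kliminf (\<lambda>n. endo (us n))"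
  proof (cases "\<alpha> = 0")
    case True
    then show ?thesis
      using us_nonneg unfolding kliminf_def by (auto intro!: exI[of _ "\<lambda>n. (x, 0)"])
  next
    case False
    have "(x, \<alpha>) \<in> closure (kliminf (\<lambda>n. endo (us n)))"
      unfolding closure_approachable
    proof (intro allI impI)
      fix e :: real assume "e > 0"
      obtain g where g: "g \<in> P" "max 0 (\<alpha> - e) < g" "g < \<alpha>"
        using exists_between_if_dense[OF P(2), of "max 0 (\<alpha> - e)" \<alpha>] \<alpha> False \<open>e > 0\<close> by auto
      then have "(x, g) \<in> kliminf (\<lambda>n. endo (us n))" "dist (x, g) (x, \<alpha>) < e"
        using level \<alpha> by (auto simp: dist_Pair_Pair dist_real_def)
      then show "\<exists>y\<in>kliminf (\<lambda>n. endo (us n)). dist y (x, \<alpha>) < e"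
        by blast
    qed
    then show ?thesis
      using closed_kliminf[OF ne] by (simp add: closure_closed)
  qed
qed

lemma klimsup_endo_subset_if_klimsup_cut_subset:
  fixes u :: "'a::metric_space \<Rightarrow> real" and us :: "nat \<Rightarrow> 'a \<Rightarrow> real"
  assumes u_nonneg: "\<And>x. 0 \<le> u x"
    and P: "P \<subseteq> {0<..<1}" "{0<..<1} \<subseteq> closure P"
    and cuts: "\<And>\<alpha>. \<alpha> \<in> P \<Longrightarrow> klimsup (\<lambda>n. cut (us n) \<alpha>) \<subseteq> cut u \<alpha>"
  shows "klimsup (\<lambda>n. endo (us n)) \<subseteq> endo u"
proof safe
  fix x \<alpha> assume "(x, \<alpha>) \<in> klimsup (\<lambda>n. endo (us n))"
  then obtain r f where r: "strict_mono r" and f: "\<And>j. f j \<in> endo (us (r j))"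
    and lim: "f \<longlonglongrightarrow> (x, \<alpha>)"
    by (auto simp: klimsup_def)
  have f_bounds: "0 \<le> snd (f j)" "snd (f j) \<le> 1" "snd (f j) \<le> us (r j) (fst (f j))" for j
    using f[of j] by (cases "f j"; simp)+
  have lim_fst: "(\<lambda>j. fst (f j)) \<longlonglongrightarrow> x" and lim_snd: "(\<lambda>j. snd (f j)) \<longlonglongrightarrow> \<alpha>"
    using tendsto_fst[OF lim] tendsto_snd[OF lim] by simp_all
  have "0 \<le> \<alpha>"
    by (rule LIMSEQ_le_const[OF lim_snd]) (use f_bounds in auto)
  moreover have "\<alpha> \<le> 1"
    by (rule LIMSEQ_le_const2[OF lim_snd]) (use f_bounds in auto)
  moreover have "\<alpha> \<le> u x"
  proof (rule ccontr)
    assume "\<not> \<alpha> \<le> u x"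
    then have "u x < \<alpha>" by simp
    then obtain g where g: "g \<in> P" "u x < g" "g < \<alpha>"
      by (rule exists_between_if_dense[OF P(2) u_nonneg _ \<open>\<alpha> \<le> 1\<close>])
    have "g \<noteq> 0"
      using g(1) P(1) by auto
    have "\<forall>\<^sub>F j in sequentially. fst (f j) \<in> cut (us (r j)) g"
      using order_tendstoD(1)[OF lim_snd g(3)]
    proof eventually_elim
      case (elim j)
      then show ?case
        using f_bounds(3)[of j] \<open>g \<noteq> 0\<close> by (simp add: cut_nonzero)
    qed
    then have "x \<in> klimsup (\<lambda>n. cut (us n) g)"
      by (rule klimsupI_eventually[OF r _ lim_fst])
    then have "g \<le> u x"
      using cuts[OF g(1)] \<open>g \<noteq> 0\<close> by (auto simp: cut_nonzero)
    with g(2) show False by simp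
  qed
  ultimately show "(x, \<alpha>) \<in> endo u" by simp
qed

lemma gamma_conv_if_cuts_converge_on_dense:
  assumes u: "u \<in> F_USC" and us: "\<And>n. us n \<in> F_USC"
    and P: "P \<subseteq> {0<..<1}" "{0<..<1} \<subseteq> closure P"
    and conv: "\<And>\<alpha>. \<alpha> \<in> P \<Longrightarrow> kuratowski_conv (\<lambda>n. cut (us n) \<alpha>) (cut u \<alpha>)"
  shows "gamma_conv us u"
proof -
  have cuts: "cut u \<alpha> \<subseteq> kliminf (\<lambda>n. cut (us n) \<alpha>)" "klimsup (\<lambda>n. cut (us n) \<alpha>) \<subseteq> cut u \<alpha>"
    if "\<alpha> \<in> P" for \<alpha>
    using conv[OF that] by (simp_all add: kuratowski_conv_iff)
  have "endo u \<subseteq> kliminf (\<lambda>n. endo (us n))"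
    using F_USC_range[OF us] by (intro endo_subset_kliminf_if_cut_subset_kliminf[OF _ P cuts(1)]) auto
  moreover have "klimsup (\<lambda>n. endo (us n)) \<subseteq> endo u"
    using F_USC_range[OF u] by (intro klimsup_endo_subset_if_klimsup_cut_subset[OF _ P cuts(2)]) auto
  ultimately show ?thesis
    by (simp add: gamma_conv_def kuratowski_conv_iff)
qed

lemma gamma_conv_if_cuts_converge_ae:
  assumes u: "u \<in> F_USC" and us: "\<And>n. us n \<in> F_USC"
    and conv: "AE \<alpha> in lborel. \<alpha> \<in> {0<..<1} \<longrightarrow> kuratowski_conv (\<lambda>n. cut (us n) \<alpha>) (cut u \<alpha>)"
  shows "gamma_conv us u"
proof -
  obtain N where N: "N \<in> null_sets lborel"
    "{\<alpha>. \<not> (\<alpha> \<in> {0<..<1} \<longrightarrow> kuratowski_conv (\<lambda>n. cut (us n) \<alpha>) (cut u \<alpha>))} \<subseteq> N"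
    using conv by (auto simp: eventually_ae_filter)
  show ?thesis
  proof (rule gamma_conv_if_cuts_converge_on_dense[OF u us, where P = "{0<..<1} - N"])
    show "{0<..<1} \<subseteq> closure ({0<..<1} - N)"
      using N(1) by (rule subset_closure_diff_null_set[OF open_greaterThanLessThan])
    show "kuratowski_conv (\<lambda>n. cut (us n) \<alpha>) (cut u \<alpha>)" if "\<alpha> \<in> {0<..<1} - N" for \<alpha>
      using N(2) that by blast
  qed auto
qed

lemma klimsup_cut_subset_if_klimsup_endo_subset:
  assumes endo: "klimsup (\<lambda>n. endo (us n)) \<subseteq> endo u" and \<alpha>: "0 < \<alpha>" "\<alpha> \<le> 1"
  shows "klimsup (\<lambda>n. cut (us n) \<alpha>) \<subseteq> cut u \<alpha>"
proof
  fix x assume "x \<in> klimsup (\<lambda>n. cut (us n) \<alpha>)"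
  then obtain r f where "strict_mono r" "\<And>j. f j \<in> cut (us (r j)) \<alpha>" "f \<longlonglongrightarrow> x"
    by (auto simp: klimsup_def)
  then have "(x, \<alpha>) \<in> klimsup (\<lambda>n. endo (us n))"
    unfolding klimsup_def mem_Collect_eq using \<alpha>
    by (intro exI[of _ r] exI[of _ "\<lambda>j. (f j, \<alpha>)"]) (auto simp: cut_nonzero intro: tendsto_intros)
  then show "x \<in> cut u \<alpha>"
    using endo \<alpha> by (auto simp: cut_nonzero)
qed

lemma superlevel_subset_kliminf_cut_if_endo_subset_kliminf:
  assumes endo: "endo u \<subseteq> kliminf (\<lambda>n. endo (us n))" and ne: "\<And>n. cut (us n) \<alpha> \<noteq> {}"
    and u_le_1: "\<And>x. u x \<le> 1" and "0 < \<alpha>"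
  shows "{x. \<alpha> < u x} \<subseteq> kliminf (\<lambda>n. cut (us n) \<alpha>)"
proof safe
  fix x assume "\<alpha> < u x"
  then have "(x, u x) \<in> kliminf (\<lambda>n. endo (us n))"
    using endo u_le_1[of x] \<open>0 < \<alpha>\<close> by auto
  then obtain f where f: "\<And>n. f n \<in> endo (us n)" "f \<longlonglongrightarrow> (x, u x)"
    by (auto simp: kliminf_def)
  have "\<forall>\<^sub>F n in sequentially. \<alpha> < snd (f n)"
    using order_tendstoD(1)[OF tendsto_snd[OF f(2)]] \<open>\<alpha> < u x\<close> by simp
  then have "\<forall>\<^sub>F n in sequentially. fst (f n) \<in> cut (us n) \<alpha>"
  proof eventually_elim
    case (elim n)
    then show ?case
      using f(1)[of n] \<open>0 < \<alpha>\<close> by (cases "f n") (auto simp: cut_nonzero)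
  qed
  then show "x \<in> kliminf (\<lambda>n. cut (us n) \<alpha>)"
    using ne tendsto_fst[OF f(2)] by (auto intro: kliminfI_eventually)
qed

lemma cut_eq_closure_superlevel:
  assumes "u \<in> F_USC" "\<alpha> \<in> {0<..<1} - platform_points u"
  shows "cut u \<alpha> = closure {x. \<alpha> < u x}"
proof -
  have "closure {x. \<alpha> < u x} \<subseteq> cut u \<alpha>"
    using assms F_USC_cut[of u \<alpha>] by (intro closure_minimal) (auto simp: cut_nonzero)
  with assms(2) show ?thesis
    by (auto simp: platform_points_def)
qed

lemma cuts_converge_if_gamma_conv:
  assumes u: "u \<in> F_USC" and us: "\<And>n. us n \<in> F_USC" and conv: "gamma_conv us u"
    and \<alpha>: "\<alpha> \<in> {0<..<1} - platform_points u"
  shows "kuratowski_conv (\<lambda>n. cut (us n) \<alpha>) (cut u \<alpha>)"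
proof -
  have endo: "endo u \<subseteq> kliminf (\<lambda>n. endo (us n))" "klimsup (\<lambda>n. endo (us n)) \<subseteq> endo u"
    using conv by (simp_all add: gamma_conv_def kuratowski_conv_iff)
  have ne: "cut (us n) \<alpha> \<noteq> {}" for n
    using F_USC_cut[OF us] \<alpha> by simp
  have "{x. \<alpha> < u x} \<subseteq> kliminf (\<lambda>n. cut (us n) \<alpha>)"
    using F_USC_range[OF u] \<alpha> by (intro superlevel_subset_kliminf_cut_if_endo_subset_kliminf[OF endo(1) ne]) auto
  then have "cut u \<alpha> \<subseteq> kliminf (\<lambda>n. cut (us n) \<alpha>)"
    unfolding cut_eq_closure_superlevel[OF u \<alpha>] by (rule closure_minimal[OF _ closed_kliminf[OF ne]])
  moreover have "klimsup (\<lambda>n. cut (us n) \<alpha>) \<subseteq> cut u \<alpha>"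
    using \<alpha> by (intro klimsup_cut_subset_if_klimsup_endo_subset[OF endo(2)]) auto
  ultimately show ?thesis
    by (simp add: kuratowski_conv_iff)
qed

lemma finite_if_separated_in_compact:
  fixes S :: "'a::metric_space set"
  assumes "compact K" "S \<subseteq> K" "0 < e"
    and separated: "\<And>x y. x \<in> S \<Longrightarrow> y \<in> S \<Longrightarrow> x \<noteq> y \<Longrightarrow> e \<le> dist x y"
  shows "finite S"
proof -
  have "\<not> z islimpt S" for z
  proof
    assume "z islimpt S"
    then have inf: "infinite (S \<inter> ball z (e / 2))"
      using \<open>0 < e\<close> by (simp add: islimpt_eq_infinite_ball)
    then obtain x where x: "x \<in> S \<inter> ball z (e / 2)"
      using infinite_imp_nonempty by blast
    moreover obtain y where "y \<in> S \<inter> ball z (e / 2)" "y \<noteq> x"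
      using inf finite_subset[of "S \<inter> ball z (e / 2)" "{x}"] by blast
    ultimately show False
      using separated[of x y] dist_triangle_half_l[of x z e y] by (auto simp: dist_commute)
  qed
  then show ?thesis
    using finite_not_islimpt_in_compact[OF \<open>compact K\<close>] \<open>S \<subseteq> K\<close> by (metis inf.absorb_iff2)
qed

definition local_max_values :: "('a::metric_space \<Rightarrow> real) \<Rightarrow> real set" where
  "local_max_values u = {u x | x. \<exists>r>0. \<forall>y\<in>ball x r. u y \<le> u x}"

lemma finite_local_max_values_above:
  fixes u :: "'a::metric_space \<Rightarrow> real"
  assumes compact: "compact {x. c \<le> u x}" and "0 < \<delta>"
  shows "finite {\<alpha>. c \<le> \<alpha> \<and> (\<exists>x. u x = \<alpha> \<and> (\<forall>y\<in>ball x \<delta>. u y \<le> \<alpha>))}" (is "finite ?V")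
proof -
  define V where "V = ?V"
  have "\<forall>\<alpha>\<in>V. \<exists>x. u x = \<alpha> \<and> (\<forall>y\<in>ball x \<delta>. u y \<le> \<alpha>)"
    by (simp add: V_def)
  from bchoice[OF this] obtain X where "\<forall>\<alpha>\<in>V. u (X \<alpha>) = \<alpha> \<and> (\<forall>y\<in>ball (X \<alpha>) \<delta>. u y \<le> \<alpha>)" ..
  then have uX: "\<And>\<alpha>. \<alpha> \<in> V \<Longrightarrow> u (X \<alpha>) = \<alpha>"
    and below: "\<And>\<alpha> y. \<alpha> \<in> V \<Longrightarrow> dist (X \<alpha>) y < \<delta> \<Longrightarrow> u y \<le> \<alpha>"
    by simp_all
  have above: "c \<le> \<alpha>" if "\<alpha> \<in> V" for \<alpha>
    using that by (simp add: V_def)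
  have separated: "\<delta> \<le> dist (X \<alpha>) (X \<beta>)" if "\<alpha> \<in> V" "\<beta> \<in> V" "\<alpha> < \<beta>" for \<alpha> \<beta>
  proof (rule ccontr)
    assume "\<not> \<delta> \<le> dist (X \<alpha>) (X \<beta>)"
    then have "u (X \<beta>) \<le> \<alpha>"
      using below[OF that(1)] by simp
    with uX[OF that(2)] that(3) show False
      by simp
  qed
  have "finite (X ` V)"
  proof (rule finite_if_separated_in_compact[OF compact _ \<open>0 < \<delta>\<close>])
    show "X ` V \<subseteq> {x. c \<le> u x}"
      using uX above by auto
    show "\<delta> \<le> dist x y" if xy: "x \<in> X ` V" "y \<in> X ` V" "x \<noteq> y" for x y
    proof -
      obtain \<alpha> \<beta> where "\<alpha> \<in> V" "\<beta> \<in> V" "x = X \<alpha>" "y = X \<beta>" "\<alpha> \<noteq> \<beta>"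
        using xy by blast
      then show ?thesis
        using separated[of \<alpha> \<beta>] separated[of \<beta> \<alpha>] by (auto simp: dist_commute neq_iff)
    qed
  qed
  moreover have "inj_on X V"
    using uX by (metis inj_onI)
  ultimately show ?thesis
    unfolding V_def[symmetric] by (rule finite_imageD)
qed

lemma countable_positive_local_max_values:
  fixes u :: "'a::metric_space \<Rightarrow> real"
  assumes compact: "\<And>c. 0 < c \<Longrightarrow> compact {x. c \<le> u x}"
  shows "countable (local_max_values u \<inter> {0<..})"
proof -
  let ?V = "\<lambda>k m::nat. {\<alpha>. 1 / Suc k \<le> \<alpha> \<and> (\<exists>x. u x = \<alpha> \<and> (\<forall>y\<in>ball x (1 / Suc m). u y \<le> \<alpha>))}"
  have "local_max_values u \<inter> {0<..} \<subseteq> (\<Union>k m. ?V k m)"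
  proof
    fix \<alpha> assume "\<alpha> \<in> local_max_values u \<inter> {0<..}"
    then obtain x r where "0 < \<alpha>" "0 < r" "u x = \<alpha>" "\<forall>y\<in>ball x r. u y \<le> \<alpha>"
      by (auto simp: local_max_values_def)
    moreover obtain k where "inverse (Suc k) < \<alpha>"
      using reals_Archimedean \<open>0 < \<alpha>\<close> by blast
    moreover obtain m where "inverse (Suc m) < r"
      using reals_Archimedean \<open>0 < r\<close> by blast
    ultimately have "\<alpha> \<in> ?V k m"
      by (auto simp: inverse_eq_divide)
    then show "\<alpha> \<in> (\<Union>k m. ?V k m)"
      by blast
  qed
  moreover have "finite (?V k m)" for k m
    by (rule finite_local_max_values_above) (use compact in auto)
  ultimately show ?thesis
    by (meson countable_UN countable_finite countable_subset countableI_type)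
qed

lemma platform_points_subset_local_max_values:
  "platform_points u \<subseteq> local_max_values u \<inter> {0<..}"
proof
  fix \<alpha> assume \<alpha>: "\<alpha> \<in> platform_points u"
  then obtain x where x: "x \<in> cut u \<alpha>" "x \<notin> closure {x. \<alpha> < u x}"
    by (auto simp: platform_points_def)
  then obtain r where "0 < r" and r: "\<And>y. y \<in> ball x r \<Longrightarrow> u y \<le> \<alpha>"
    unfolding closure_approachable by (force simp: dist_commute)
  have "\<alpha> \<le> u x"
    using x(1) \<alpha> by (simp add: cut_nonzero platform_points_def)
  moreover have "u x \<le> \<alpha>"
    using r \<open>0 < r\<close> by simp
  ultimately have "\<alpha> = u x \<and> (\<exists>r>0. \<forall>y\<in>ball x r. u y \<le> u x)"
    using \<open>0 < r\<close> r by auto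
  then have "\<alpha> \<in> local_max_values u"
    unfolding local_max_values_def by blast
  moreover have "0 < \<alpha>"
    using \<alpha> by (simp add: platform_points_def)
  ultimately show "\<alpha> \<in> local_max_values u \<inter> {0<..}"
    by simp
qed

lemma countable_platform_points:
  assumes "u \<in> F_USCG"
  shows "countable (platform_points u)"
proof -
  have "compact {x. c \<le> u x}" if "0 < c" for c
  proof (cases "c \<le> 1")
    case True
    then have "compact (cut u c)"
      using assms that by (simp add: F_USCG_def)
    then show ?thesis
      using that by (simp add: cut_nonzero)
  next
    case False
    have "u x < c" for x
      using F_USC_range[of u x] assms False by (simp add: F_USCG_def)
    then have "{x. c \<le> u x} = {}"
      by (simp add: not_le)
    then show ?thesis
      by simp
  qed
  then have "countable (local_max_values u \<inter> {0<..})"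
    by (rule countable_positive_local_max_values)
  then show ?thesis
    using platform_points_subset_local_max_values by (rule countable_subset[rotated])
qed

lemma cuts_converge_ae_if_gamma_conv:
  assumes u: "u \<in> F_USCG" and us: "\<And>n. us n \<in> F_USC" and conv: "gamma_conv us u"
  shows "AE \<alpha> in lborel. \<alpha> \<in> {0<..<1} \<longrightarrow> kuratowski_conv (\<lambda>n. cut (us n) \<alpha>) (cut u \<alpha>)"
proof -
  have "platform_points u \<in> null_sets lborel"
    using countable_platform_points[OF u] by (rule countable_imp_null_set_lborel)
  then show ?thesis
    using cuts_converge_if_gamma_conv[OF _ us conv] u
    by (auto simp: F_USCG_def elim!: eventually_mono[OF AE_not_in])
qed

lemma gamma_conv_if_cuts_converge_on_dense_nonplatform:
  assumes u: "u \<in> F_USCG" and us: "\<And>n. us n \<in> F_USC"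
    and P: "P \<subseteq> {0<..<1} - platform_points u" "{0<..<1} - platform_points u \<subseteq> closure P"
    and conv: "\<And>\<alpha>. \<alpha> \<in> P \<Longrightarrow> kuratowski_conv (\<lambda>n. cut (us n) \<alpha>) (cut u \<alpha>)"
  shows "gamma_conv us u"
proof (rule gamma_conv_if_cuts_converge_on_dense[OF _ us _ _ conv])
  show "u \<in> F_USC" "P \<subseteq> {0<..<1}"
    using u P(1) by (auto simp: F_USCG_def)
  have "platform_points u \<in> null_sets lborel"
    using countable_platform_points[OF u] by (rule countable_imp_null_set_lborel)
  then have "{0<..<1} \<subseteq> closure ({0<..<1} - platform_points u)"
    by (rule subset_closure_diff_null_set[OF open_greaterThanLessThan])
  then show "{0<..<1} \<subseteq> closure P"
    using closure_mono[OF P(2)] by simp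
qed

theorem theorem3p7:
  fixes u :: "'a::metric_space \<Rightarrow> real" and us :: "nat \<Rightarrow> 'a \<Rightarrow> real"
  assumes "u \<in> F_USCG" and "\<And>n. us n \<in> F_USCG"
  shows "(gamma_conv us u \<longleftrightarrow>
            (AE \<alpha> in lborel. \<alpha> \<in> {0<..<1} \<longrightarrow>
               kuratowski_conv (\<lambda>n. cut (us n) \<alpha>) (cut u \<alpha>)))
       \<and> (gamma_conv us u \<longleftrightarrow>
            (\<forall>\<alpha>\<in>{0<..<1} - platform_points u.
               kuratowski_conv (\<lambda>n. cut (us n) \<alpha>) (cut u \<alpha>)))
       \<and> (gamma_conv us u \<longleftrightarrow>
            (\<exists>P. P \<subseteq> {0<..<1} - platform_points u
               \<and> {0<..<1} - platform_points u \<subseteq> closure P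
               \<and> (\<forall>\<alpha>\<in>P. kuratowski_conv (\<lambda>n. cut (us n) \<alpha>) (cut u \<alpha>))))
       \<and> (gamma_conv us u \<longleftrightarrow>
            (\<exists>P. countable P \<and> P \<subseteq> {0<..<1} - platform_points u
               \<and> {0<..<1} - platform_points u \<subseteq> closure P
               \<and> (\<forall>\<alpha>\<in>P. kuratowski_conv (\<lambda>n. cut (us n) \<alpha>) (cut u \<alpha>))))"
proof -
  have u: "u \<in> F_USC" and us: "\<And>n. us n \<in> F_USC"
    using assms by (simp_all add: F_USCG_def)
  define D where "D = {0<..<1::real} - platform_points u"
  define K where "K \<alpha> \<longleftrightarrow> kuratowski_conv (\<lambda>n. cut (us n) \<alpha>) (cut u \<alpha>)" for \<alpha>
  have fwd: "\<forall>\<alpha>\<in>D. K \<alpha>" if "gamma_conv us u"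
    using cuts_converge_if_gamma_conv[OF u us that] by (simp add: D_def K_def)
  have bwd: "gamma_conv us u" if "P \<subseteq> D" "D \<subseteq> closure P" "\<forall>\<alpha>\<in>P. K \<alpha>" for P
    using gamma_conv_if_cuts_converge_on_dense_nonplatform[of u us, OF assms(1) us] that
    by (simp add: D_def K_def)
  obtain T where T: "countable T" "T \<subseteq> D" "D \<subseteq> closure T"
    by (rule separable)
  have "gamma_conv us u \<longleftrightarrow> (AE \<alpha> in lborel. \<alpha> \<in> {0<..<1} \<longrightarrow> K \<alpha>)"
    using cuts_converge_ae_if_gamma_conv[of u us, OF assms(1) us]
      gamma_conv_if_cuts_converge_ae[of u us, OF u us]
    unfolding K_def by blast
  moreover have "gamma_conv us u \<longleftrightarrow> (\<forall>\<alpha>\<in>D. K \<alpha>)"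
    using fwd bwd[of D] closure_subset[of D] by blast
  moreover have "gamma_conv us u \<longleftrightarrow> (\<exists>P. P \<subseteq> D \<and> D \<subseteq> closure P \<and> (\<forall>\<alpha>\<in>P. K \<alpha>))"
    using fwd bwd closure_subset[of D] by blast
  moreover have "gamma_conv us u \<longleftrightarrow>
      (\<exists>P. countable P \<and> P \<subseteq> D \<and> D \<subseteq> closure P \<and> (\<forall>\<alpha>\<in>P. K \<alpha>))"
    using fwd bwd T by blast
  ultimately show ?thesis
    unfolding D_def K_def by blast
qed

end
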